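(* Let $Q$ be a finite closed down set of pairs with parameters $p,q,k$, $I_0,\dots,I_{k-1}$, $II_1,\dots,II_k$ as described in the context. Then $$\sum_{j=1}^k II_j=p\qquad\text{and}\qquad \sum_{j=0}^{k-1}I_j=q-p.$$
   Context: Let $c_1,c_2,\dots$ and $s_1,s_2,\dots$ be distinct vertices, and let $Q$ be a finite set of pairs $c_as_b$ that is closed down: $c_as_b\in Q$ implies $c_{a'}s_{b'}\in Q$ for all $a'\le a$, $b'\le b$. Write $[i]\times[j]=\{c_as_b:a\le i,b\le j\}$, and let $\nu(\ell,Q)$ be the matching number of the bipartite graph with sides $\{c_1,\dots,c_\ell\},\{s_1,\dots,s_\ell\}$ and edge set $([\ell]\times[\ell])\setminus Q$. Let $p\ge0$ be the largest integer with $[p]\times[p]\subseteq Q$, and $q\ge0$ the least integer such that $\nu(\ell,Q)=\ell$ for all $\ell\ge p+q$. For every $\ell>p$ one has $\nu(\ell,Q)-\nu(\ell-1,Q)\in\{1,2\}$. The integer interval $(p,p+q]$ is divided, in increasing order, into consecutive left-open right-closed integer intervals $\mathcal O_0,\mathcal T_1,\mathcal O_1,\dots,\mathcal O_{k-1},\mathcal T_k$ such that the increment $\nu(\ell,Q)-\nu(\ell-1,Q)$ is $1$ for $\ell$ in each $\mathcal O_j$ and $2$ for $\ell$ in each $\mathcal T_j$; all intervals except possibly $\mathcal O_0$ are nonempty and the last one is $\mathcal T_k$. Set $I_j=|\mathcal O_j|$ and $II_j=|\mathcal T_j|$. *)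

theory Defs
  imports Main
begin

text \<open>Pairs c_a s_b are encoded as (a,b) :: nat \<times> nat with a, b \<ge> 1.\<close>

definition closed_down :: "(nat \<times> nat) set \<Rightarrow> bool" where
  "closed_down Q \<longleftrightarrow> Q \<subseteq> {1..} \<times> {1..} \<and>
     (\<forall>a b a' b'. (a, b) \<in> Q \<longrightarrow> 1 \<le> a' \<longrightarrow> a' \<le> a \<longrightarrow> 1 \<le> b' \<longrightarrow> b' \<le> b \<longrightarrow> (a', b') \<in> Q)"

definition box :: "nat \<Rightarrow> nat \<Rightarrow> (nat \<times> nat) set" where
  "box i j = {1..i} \<times> {1..j}"

text \<open>A matching in the bipartite graph with sides {c_1..c_l}, {s_1..s_l} and edge set
  ([l] x [l]) minus Q: a set of edges no two of which share an endpoint.\<close>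
definition is_matching :: "nat \<Rightarrow> (nat \<times> nat) set \<Rightarrow> (nat \<times> nat) set \<Rightarrow> bool" where
  "is_matching l Q M \<longleftrightarrow> M \<subseteq> box l l - Q \<and> inj_on fst M \<and> inj_on snd M"

definition nu :: "nat \<Rightarrow> (nat \<times> nat) set \<Rightarrow> nat" where
  "nu l Q = Max {card M | M. is_matching l Q M}"

definition p_par :: "(nat \<times> nat) set \<Rightarrow> nat" where
  "p_par Q = (GREATEST p. box p p \<subseteq> Q)"

definition q_par :: "(nat \<times> nat) set \<Rightarrow> nat" where
  "q_par Q = (LEAST q. \<forall>l \<ge> p_par Q + q. nu l Q = l)"

definition incr :: "(nat \<times> nat) set \<Rightarrow> nat \<Rightarrow> int" where
  "incr Q l = int (nu l Q) - int (nu (l - 1) Q)"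

end

theory Submission
  imports Defs
begin

text \<open>The matching number is \<open>0\<close> at \<open>p\<close> (no edges at all) and \<open>p + q\<close> at \<open>p + q\<close>.
  Telescoping the increments block by block, the 1-blocks contribute \<open>\<Sum> I\<^sub>j\<close> and the
  2-blocks \<open>2 \<Sum> II\<^sub>j\<close>, while the block lengths add up to \<open>q\<close>. Hence
  \<open>\<Sum> I\<^sub>j + 2 \<Sum> II\<^sub>j = p + q\<close> and \<open>\<Sum> I\<^sub>j + \<Sum> II\<^sub>j = q\<close>, which gives both identities.\<close>

lemma telescope_constant_increment:
  fixes f :: "nat \<Rightarrow> int"
  assumes "x \<le> y" and "\<forall>l \<in> {x<..y}. f l - f (l - 1) = c"
  shows "f y - f x = c * int (y - x)"
  using assms
proof (induction y)
  case 0
  then show ?case by simp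
next
  case (Suc y)
  show ?case
  proof (cases "x = Suc y")
    case False
    then have "x \<le> y" using Suc.prems(1) by simp
    with Suc have "f y - f x = c * int (y - x)" by auto
    moreover have "f (Suc y) - f y = c"
      using bspec[OF Suc.prems(2), of "Suc y"] \<open>x \<le> y\<close> by simp
    ultimately show ?thesis using \<open>x \<le> y\<close> by (simp add: Suc_diff_le algebra_simps)
  qed simp
qed

lemma sum_alternating_block_lengths:
  fixes b :: "nat \<Rightarrow> nat"
  assumes "\<forall>i < 2 * n. b i \<le> b (Suc i)"
  shows "b (2 * n) = b 0 + (\<Sum>j < n. b (2 * j + 1) - b (2 * j))
                          + (\<Sum>j = 1..n. b (2 * j) - b (2 * j - 1))"
  using assms
proof (induction n)
  case (Suc n)
  have "b (2 * n) \<le> b (2 * n + 1)" "b (2 * n + 1) \<le> b (2 * n + 2)"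
    using Suc.prems[rule_format, of "2 * n"] Suc.prems[rule_format, of "2 * n + 1"] by simp_all
  moreover have "b (2 * n) = b 0 + (\<Sum>j < n. b (2 * j + 1) - b (2 * j))
                                  + (\<Sum>j = 1..n. b (2 * j) - b (2 * j - 1))"
    using Suc by simp
  moreover have "2 * Suc n = 2 * n + 2" by simp
  ultimately show ?case by simp
qed simp

lemma telescope_alternating_increments:
  fixes f :: "nat \<Rightarrow> int" and b :: "nat \<Rightarrow> nat"
  assumes "\<forall>i < 2 * n. b i \<le> b (Suc i)"
    and "\<forall>j < n. \<forall>l \<in> {b (2 * j)<..b (2 * j + 1)}. f l - f (l - 1) = 1"
    and "\<forall>j \<in> {1..n}. \<forall>l \<in> {b (2 * j - 1)<..b (2 * j)}. f l - f (l - 1) = 2"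
  shows "f (b (2 * n)) - f (b 0) = int (\<Sum>j < n. b (2 * j + 1) - b (2 * j))
                                    + 2 * int (\<Sum>j = 1..n. b (2 * j) - b (2 * j - 1))"
  using assms
proof (induction n)
  case (Suc n)
  have mono: "b (2 * n) \<le> b (2 * n + 1)" "b (2 * n + 1) \<le> b (2 * n + 2)"
    using Suc.prems(1)[rule_format, of "2 * n"] Suc.prems(1)[rule_format, of "2 * n + 1"]
    by simp_all
  have "f (b (2 * n + 1)) - f (b (2 * n)) = 1 * int (b (2 * n + 1) - b (2 * n))"
    using mono(1) Suc.prems(2) by (intro telescope_constant_increment) auto
  moreover have "f (b (2 * n + 2)) - f (b (2 * n + 1)) = 2 * int (b (2 * n + 2) - b (2 * n + 1))"
  proof (intro telescope_constant_increment)
    show "\<forall>l \<in> {b (2 * n + 1)<..b (2 * n + 2)}. f l - f (l - 1) = 2"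
      using Suc.prems(3)[rule_format, of "Suc n"] by auto
  qed (use mono in simp)
  moreover have "f (b (2 * n)) - f (b 0) = int (\<Sum>j < n. b (2 * j + 1) - b (2 * j))
                                    + 2 * int (\<Sum>j = 1..n. b (2 * j) - b (2 * j - 1))"
  proof (rule Suc.IH)
    show "\<forall>i < 2 * n. b i \<le> b (Suc i)" using Suc.prems(1) by simp
    show "\<forall>j < n. \<forall>l \<in> {b (2 * j)<..b (2 * j + 1)}. f l - f (l - 1) = 1"
      using Suc.prems(2) less_SucI by blast
    show "\<forall>j \<in> {1..n}. \<forall>l \<in> {b (2 * j - 1)<..b (2 * j)}. f l - f (l - 1) = 2"
      using Suc.prems(3) by auto
  qed
  ultimately show ?case by simp
qed simp

lemma nu_eq_0_if_box_subset:
  assumes "box l l \<subseteq> Q"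
  shows "nu l Q = 0"
proof -
  have "is_matching l Q M \<longleftrightarrow> M = {}" for M
    using assms by (auto simp: is_matching_def)
  then show ?thesis by (simp add: nu_def)
qed

lemma card_le_if_is_matching:
  assumes "is_matching l Q M"
  shows "card M \<le> l"
proof -
  have "card M = card (fst ` M)"
    using assms by (simp add: is_matching_def card_image)
  also have "\<dots> \<le> card {1..l}"
    using assms by (intro card_mono) (auto simp: is_matching_def box_def)
  finally show ?thesis by simp
qed

lemma nu_eq_self_if_bounded:
  assumes "\<forall>(a, b) \<in> Q. a \<le> N \<and> b \<le> N" and "2 * N \<le> l"
  shows "nu l Q = l"
proof -
  define M where "M = (\<lambda>i. (i, l + 1 - i)) ` {1..l}"
  \<comment> \<open>the anti-diagonal avoids \<open>Q\<close>, as \<open>i + (l + 1 - i) > 2 N\<close>\<close>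
  have "M \<inter> Q = {}"
    using assms unfolding M_def by fastforce
  then have "is_matching l Q M"
    unfolding is_matching_def M_def box_def by (auto simp: inj_on_def)
  moreover have "card M = l"
    unfolding M_def by (subst card_image) (auto simp: inj_on_def)
  moreover have "finite {card M | M. is_matching l Q M}"
    by (rule finite_subset[of _ "{0..l}"]) (auto dest: card_le_if_is_matching)
  ultimately show ?thesis
    unfolding nu_def by (intro Max_eqI) (auto dest: card_le_if_is_matching)
qed

lemma finite_pairs_bounded:
  fixes Q :: "(nat \<times> nat) set"
  assumes "finite Q"
  obtains N where "\<forall>(a, b) \<in> Q. a \<le> N \<and> b \<le> N"
proof -
  have "finite (fst ` Q \<union> snd ` Q)" using assms by simp
  then obtain N where "\<forall>x \<in> fst ` Q \<union> snd ` Q. x \<le> N"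
    using finite_nat_set_iff_bounded_le by blast
  then have "a \<le> N \<and> b \<le> N" if "(a, b) \<in> Q" for a b
    using that by (metis UnCI fst_conv snd_conv image_eqI)
  with that show ?thesis by blast
qed

lemma box_p_par_subset:
  assumes "finite Q"
  shows "box (p_par Q) (p_par Q) \<subseteq> Q"
proof -
  obtain N where N: "\<forall>(a, b) \<in> Q. a \<le> N \<and> b \<le> N"
    using finite_pairs_bounded[OF assms] .
  have bounded: "y \<le> N" if "box y y \<subseteq> Q" for y
  proof (cases "y = 0")
    case False
    then have "(y, y) \<in> Q" using that by (auto simp: box_def)
    with N show ?thesis by auto
  qed simp
  show ?thesis
    unfolding p_par_def
  proof (rule GreatestI_nat)
    show "box 0 0 \<subseteq> Q" by (simp add: box_def)
  qed (fact bounded)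
qed

lemma nu_p_par:
  assumes "finite Q"
  shows "nu (p_par Q) Q = 0"
  using nu_eq_0_if_box_subset[OF box_p_par_subset[OF assms]] .

lemma nu_p_par_plus_q_par:
  assumes "finite Q"
  shows "nu (p_par Q + q_par Q) Q = p_par Q + q_par Q"
proof -
  obtain N where N: "\<forall>(a, b) \<in> Q. a \<le> N \<and> b \<le> N"
    using finite_pairs_bounded[OF assms] .
  have "\<forall>l \<ge> p_par Q + q_par Q. nu l Q = l"
    unfolding q_par_def by (rule LeastI[of _ "2 * N"]) (auto intro: nu_eq_self_if_bounded[OF N])
  then show ?thesis by simp
qed

theorem corollary3:
  fixes Q :: "(nat \<times> nat) set" and k :: nat and b :: "nat \<Rightarrow> nat"
  assumes "finite Q" and "closed_down Q"
    and "b 0 = p_par Q" and "b (2 * k) = p_par Q + q_par Q"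
    and "\<forall>i < 2 * k. b i \<le> b (Suc i)"
    and "\<forall>i. 1 \<le> i \<and> i < 2 * k \<longrightarrow> b i < b (Suc i)"
    and "\<forall>j < k. \<forall>l \<in> {b (2 * j)<..b (2 * j + 1)}. incr Q l = 1"
    and "\<forall>j \<in> {1..k}. \<forall>l \<in> {b (2 * j - 1)<..b (2 * j)}. incr Q l = 2"
  shows "(\<Sum>j = 1..k. b (2 * j) - b (2 * j - 1)) = p_par Q
    \<and> int (\<Sum>j < k. b (2 * j + 1) - b (2 * j)) = int (q_par Q) - int (p_par Q)"
proof -
  let ?I = "\<Sum>j < k. b (2 * j + 1) - b (2 * j)"
  and ?II = "\<Sum>j = 1..k. b (2 * j) - b (2 * j - 1)"
  have "int (nu (b (2 * k)) Q) - int (nu (b 0) Q) = int ?I + 2 * int ?II"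
    using assms(5,7,8) unfolding incr_def by (rule telescope_alternating_increments)
  then have "int (p_par Q + q_par Q) = int ?I + 2 * int ?II"
    by (simp only: assms(3,4) nu_p_par[OF assms(1)] nu_p_par_plus_q_par[OF assms(1)]
        of_nat_0 diff_zero)
  moreover have "p_par Q + q_par Q = p_par Q + ?I + ?II"
    using sum_alternating_block_lengths[OF assms(5)] assms(3,4) by simp
  ultimately show ?thesis by linarith
qed

end
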